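(* Let $M$ be a set of machines, $c\ge1$ a constant, $J$ a set of jobs with $|J|\le|M|^c$, and $L,l$ integers with $2|M|^c\ge L$ and $l\ge150c\ln|M|/\ln\ln|M|$. Then for every $s$, the number of bad patterns (for $M,L,l,J$) of size $s=\sum_{T,m}|B_{T,m}|$ is at most $2\exp\!\left(\frac{|J|\ln l}{8}\right)\left(\frac{eC(J)}{l}\right)^s$.
   Context: Jobs: each job $j$ has a machine sequence $\mathrm{seq}(j)\in M^*$ and a unique identifier. Standing assumption: $|M|\ge32$. $C(J)=\max_{m\in M}\sum_{j\in J}|\{i:\mathrm{seq}(j)_i=m\}|$. A bad pattern (for $M,L,l,J$) is a collection of sets $B_{T,m}$, for $0\le T<2L$ and $m\in M$, of (job, sequence position) pairs $(j,i)$, $j\in J$, such that $\mathrm{seq}(j)_i=m$ for all $(j,i)\in B_{T,m}$; each $j\in J$ appears at most once in $\bigsqcup B_{T,m}$; $|B_{T,m}|\in\{0\}\cup(l,|J|]$ for all $(T,m)$; and $\sum_{T,m}|B_{T,m}|>|J|/2$. *)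

theory Defs
  imports Complex_Main
begin

definition occ :: "('j \<Rightarrow> 'm list) \<Rightarrow> 'j \<Rightarrow> 'm \<Rightarrow> nat" where
  "occ seq j m = card {i. i < length (seq j) \<and> seq j ! i = m}"

definition congestion :: "'m set \<Rightarrow> ('j \<Rightarrow> 'm list) \<Rightarrow> 'j set \<Rightarrow> nat" where
  "congestion M seq J = Max ((\<lambda>m. \<Sum>j\<in>J. occ seq j m) ` M)"

text \<open>A bad pattern: family B T m of (job, position) pairs, indexed by 0 \<le> T < 2L and m \<in> M.
  Outside this index range B is required to be empty (so patterns are finite objects).\<close>
definition bad_pattern ::
  "'m set \<Rightarrow> int \<Rightarrow> int \<Rightarrow> ('j \<Rightarrow> 'm list) \<Rightarrow> 'j set \<Rightarrow> (int \<Rightarrow> 'm \<Rightarrow> ('j \<times> nat) set) \<Rightarrow> bool" where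
  "bad_pattern M L l seq J B \<longleftrightarrow>
     (\<forall>T m. (T \<notin> {0..<2*L} \<or> m \<notin> M) \<longrightarrow> B T m = {}) \<and>
     (\<forall>T\<in>{0..<2*L}. \<forall>m\<in>M. \<forall>(j,i)\<in>B T m. j \<in> J \<and> i < length (seq j) \<and> seq j ! i = m) \<and>
     (\<forall>T\<in>{0..<2*L}. \<forall>m\<in>M. \<forall>T'\<in>{0..<2*L}. \<forall>m'\<in>M. \<forall>j i i'.
        (j,i) \<in> B T m \<longrightarrow> (j,i') \<in> B T' m' \<longrightarrow> T = T' \<and> m = m' \<and> i = i') \<and>
     (\<forall>T\<in>{0..<2*L}. \<forall>m\<in>M. card (B T m) = 0 \<or>
        (l < int (card (B T m)) \<and> card (B T m) \<le> card J)) \<and>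
     2 * (\<Sum>T\<in>{0..<2*L}. \<Sum>m\<in>M. card (B T m)) > card J"

definition pattern_size :: "'m set \<Rightarrow> int \<Rightarrow> (int \<Rightarrow> 'm \<Rightarrow> ('j \<times> nat) set) \<Rightarrow> nat" where
  "pattern_size M L B = (\<Sum>T\<in>{0..<2*L}. \<Sum>m\<in>M. card (B T m))"

end

theory Submission
  imports Defs "HOL-Library.FuncSet"
begin

text \<open>
  Restricting a bad pattern to the slots (T, m) \<in> {0..<2L} \<times> M embeds the bad patterns of
  size s into the families that choose, for every slot, either nothing or more than l
  operations on machine m. Weight such a family of size s by x^s, where x = y l / (e C(J))
  and y = l^(-1/8). The total weight factorises over the slots; since
  (n choose b) b! \<le> n^b and b^b \<le> b! e^b, each slot contributes at most
  1 + \<Sum>_{b>l} y^b \<le> 1 + 3 y^(l+1). The lower bound on l gives l^(l/8) \<ge> 24 |M|^(c+1),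
  so the product over the at most 4 |M|^(c+1) slots is at most exp(1/2) \<le> 2. Dividing by
  x^s and using s \<le> |J| (each job occurs at most once in a pattern) yields the bound.
\<close>

lemma ln_le_half:
  fixes u :: real
  assumes "0 < u"
  shows "ln u \<le> u / 2"
proof -
  define t where "t = sqrt u"
  have "0 < t" "u = t\<^sup>2" using assms by (simp_all add: t_def)
  then have "ln u = 2 * ln t" by (simp add: ln_realpow)
  also have "\<dots> \<le> 2 * (t - 1)" using ln_le_minus_one[OF \<open>0 < t\<close>] by simp
  also have "\<dots> \<le> t\<^sup>2 / 2"
    using zero_le_power2[of "t - 2"] by (simp add: power2_eq_square algebra_simps)
  finally show ?thesis using \<open>u = t\<^sup>2\<close> by simp
qed

lemma power_div_fact_le_exp:
  fixes x :: real
  assumes "0 \<le> x"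
  shows "x ^ n / fact n \<le> exp x"
proof -
  have "(\<Sum>k\<in>{n}. x ^ k /\<^sub>R fact k) \<le> (\<Sum>k. x ^ k /\<^sub>R fact k)"
    using assms by (intro sum_le_suminf summable_exp_generic) auto
  then show ?thesis
    by (simp add: exp_def divide_inverse mult.commute)
qed

lemma binomial_mult_power_le_one:
  fixes C l :: real
  assumes "real n \<le> C" "0 < C" "0 < l" "l \<le> real b"
  shows "real (n choose b) * (l / (exp 1 * C)) ^ b \<le> 1"
proof -
  have "real (n choose b) * fact b \<le> real n ^ b"
    by (metis binomial_fact_pow of_nat_fact of_nat_le_iff of_nat_mult of_nat_power)
  also have "\<dots> \<le> C ^ b" using assms(1) by (intro power_mono) auto
  finally have choose: "real (n choose b) * fact b \<le> C ^ b" .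
  have "l ^ b \<le> real b ^ b" using assms by (intro power_mono) auto
  also have "\<dots> \<le> fact b * exp (real b)"
    using power_div_fact_le_exp[of "real b" b] by (simp add: field_simps)
  finally have "l ^ b \<le> fact b * exp 1 ^ b" by (simp add: exp_of_nat_mult[symmetric])
  with choose have "real (n choose b) * fact b * l ^ b \<le> C ^ b * (fact b * exp 1 ^ b)"
    using assms by (intro mult_mono) auto
  then show ?thesis
    using assms by (simp add: power_divide power_mult_distrib field_simps)
qed

lemma sum_power_atLeastAtMost_le:
  fixes y :: real
  assumes "0 \<le> y" "y < 1"
  shows "(\<Sum>b = p..n. y ^ b) \<le> y ^ p / (1 - y)"
proof (cases "p \<le> n")
  case True
  have "(1 - y) * (\<Sum>b = p..n. y ^ b) = y ^ p - y ^ Suc n"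
    by (rule sum_gp_multiplied[OF True])
  also have "\<dots> \<le> y ^ p" using assms by simp
  finally show ?thesis using assms by (simp add: field_simps)
next
  case False
  then show ?thesis using assms by simp
qed

lemma sum_large_subsets_power_le:
  fixes C y :: real
  assumes "finite A" "real (card A) \<le> C" "0 < C" "0 < k" "0 \<le> y" "y < 1"
  shows "(\<Sum>X | X \<subseteq> A \<and> k < card X. (y * k / (exp 1 * C)) ^ card X)
    \<le> y ^ Suc k / (1 - y)"
proof -
  define x where "x = y * k / (exp 1 * C)"
  let ?large = "{X. X \<subseteq> A \<and> k < card X}"
  have "(\<Sum>X\<in>?large. x ^ card X)
      = (\<Sum>b = Suc k..card A. \<Sum>X\<in>{X \<in> ?large. card X = b}. x ^ card X)"
    using assms(1) by (intro sum.group[symmetric]) (auto intro: card_mono)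
  also have "\<dots> = (\<Sum>b = Suc k..card A. real (card A choose b) * x ^ b)"
  proof (rule sum.cong[OF refl])
    fix b assume "b \<in> {Suc k..card A}"
    then have "{X \<in> ?large. card X = b} = {X. X \<subseteq> A \<and> card X = b}" by auto
    then show "(\<Sum>X\<in>{X \<in> ?large. card X = b}. x ^ card X) = real (card A choose b) * x ^ b"
      using n_subsets[OF assms(1), of b] by simp
  qed
  also have "\<dots> \<le> (\<Sum>b = Suc k..card A. y ^ b)"
  proof (rule sum_mono)
    fix b assume "b \<in> {Suc k..card A}"
    then have "real (card A choose b) * (real k / (exp 1 * C)) ^ b \<le> 1"
      using assms by (intro binomial_mult_power_le_one) auto
    then have "y ^ b * (real (card A choose b) * (real k / (exp 1 * C)) ^ b) \<le> y ^ b"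
      using assms(5) by (simp add: mult_left_le)
    moreover have "real (card A choose b) * x ^ b
        = y ^ b * (real (card A choose b) * (real k / (exp 1 * C)) ^ b)"
      by (simp add: x_def divide_inverse power_mult_distrib mult_ac)
    ultimately show "real (card A choose b) * x ^ b \<le> y ^ b" by linarith
  qed
  also have "\<dots> \<le> y ^ Suc k / (1 - y)"
    using assms(5,6) by (rule sum_power_atLeastAtMost_le)
  finally show ?thesis unfolding x_def .
qed

lemma card_PiE_fixed_total_mult_power_le:
  fixes x :: real
  assumes "finite S" "\<And>t. t \<in> S \<Longrightarrow> finite (G t)" "0 \<le> x"
  shows "real (card {f \<in> PiE S G. (\<Sum>t\<in>S. card (f t)) = s}) * x ^ s
    \<le> (\<Prod>t\<in>S. \<Sum>A\<in>G t. x ^ card A)"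
proof -
  have fin: "finite (PiE S G)" using assms by (intro finite_PiE)
  let ?Q = "{f \<in> PiE S G. (\<Sum>t\<in>S. card (f t)) = s}"
  have "(\<Sum>f\<in>?Q. \<Prod>t\<in>S. x ^ card (f t)) = (\<Sum>f\<in>?Q. x ^ s)"
    by (intro sum.cong) (auto simp: power_sum[symmetric])
  then have "real (card ?Q) * x ^ s = (\<Sum>f\<in>?Q. \<Prod>t\<in>S. x ^ card (f t))"
    by simp
  also have "\<dots> \<le> (\<Sum>f\<in>PiE S G. \<Prod>t\<in>S. x ^ card (f t))"
    using fin assms(3) by (intro sum_mono2) (auto intro: prod_nonneg)
  also have "\<dots> = (\<Prod>t\<in>S. \<Sum>A\<in>G t. x ^ card A)"
    using prod_sum_PiE[of S G "\<lambda>t A. x ^ card A"] assms(1,2) by simp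
  finally show ?thesis .
qed

lemma one_plus_power_le_two:
  fixes z :: real
  assumes "0 \<le> z" "real N * z \<le> 1/2"
  shows "(1 + z) ^ N \<le> 2"
proof -
  have "(1 + z) ^ N \<le> exp z ^ N"
    using assms(1) by (intro power_mono) auto
  also have "\<dots> = exp (real N * z)" by (simp add: exp_of_nat_mult)
  also have "\<dots> \<le> exp (1/2)" using assms(2) by simp
  also have "\<dots> \<le> 2"
  proof (rule power2_le_imp_le)
    show "exp (1/2) ^ 2 \<le> (2::real) ^ 2"
      using exp_le by (simp add: exp_of_nat_mult[symmetric])
  qed simp
  finally show ?thesis .
qed

lemma powr_minus_one_eighth_le:
  fixes x :: real
  assumes "150 \<le> x"
  shows "x powr (-1/8) \<le> 2/3"
proof -
  have "(x powr (-1/8)) ^ 8 = x powr (of_nat 8 * (-1/8))"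
    using assms by (intro powr_power) simp
  also have "\<dots> = 1 / x"
    using assms by (simp add: powr_minus_divide)
  also have "\<dots> \<le> (2/3) ^ 8" using assms by (simp add: field_simps)
  finally have "(x powr (-1/8)) ^ 8 \<le> (2/3) ^ 8" .
  then show ?thesis by (simp add: power_mono_iff)
qed

lemma scaled_div_ln_bounds:
  fixes a c :: real
  assumes "1 < a" "1 \<le> c"
  shows "150 \<le> 150 * c * a / ln a" and "ln a / 2 \<le> ln (150 * c * a / ln a)"
proof -
  define u where "u = ln a"
  have "0 < u" "u < a" unfolding u_def using assms(1) ln_less_self[of a] by auto
  have "150 * 1 * 1 \<le> 150 * c * (a / u)"
    using assms(2) \<open>0 < u\<close> \<open>u < a\<close> by (intro mult_mono) auto
  then show "150 \<le> 150 * c * a / ln a" by (simp add: u_def)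
  have "ln (150 * c * a / u) = ln 150 + ln c + u - ln u"
    using assms \<open>0 < u\<close> by (simp add: ln_mult ln_div u_def)
  moreover have "0 \<le> ln c" "0 \<le> ln (150::real)" using assms(2) by simp_all
  moreover have "ln u \<le> u / 2" using \<open>0 < u\<close> by (rule ln_le_half)
  ultimately show "ln a / 2 \<le> ln (150 * c * a / ln a)"
    unfolding u_def by linarith
qed

lemma threshold_bounds:
  fixes n c l :: real
  assumes "32 \<le> n" "1 \<le> c" "150 * c * ln n / ln (ln n) \<le> l"
  shows "150 \<le> l" and "24 * n powr (c + 1) \<le> l powr (l / 8)"
proof -
  define a where "a = ln n"
  define l0 where "l0 = 150 * c * a / ln a"
  have "exp 1 < n" using exp_le assms(1) by linarith
  then have "1 < a" unfolding a_def using assms(1) ln_less_cancel_iff[of "exp 1" n] by simp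
  have "l0 \<le> l" using assms(3) by (simp add: l0_def a_def)
  have "150 \<le> l0" "ln a / 2 \<le> ln l0"
    using scaled_div_ln_bounds[OF \<open>1 < a\<close> assms(2)] by (simp_all add: l0_def)
  then show "150 \<le> l" using \<open>l0 \<le> l\<close> by linarith
  have "ln 24 \<le> a" unfolding a_def using assms(1) by simp
  moreover have "a \<le> c * a" using assms(2) \<open>1 < a\<close> by simp
  moreover have "l0 * (ln a / 2) / 8 = 75 / 8 * (c * a)"
    unfolding l0_def using \<open>1 < a\<close> by (simp add: field_simps)
  moreover have "(c + 1) * a = c * a + a" by (simp add: algebra_simps)
  ultimately have "ln 24 + (c + 1) * a \<le> l0 * (ln a / 2) / 8"
    using \<open>1 < a\<close> by linarith
  also have "\<dots> \<le> l * ln l / 8"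
  proof -
    have "ln l0 \<le> ln l" using \<open>l0 \<le> l\<close> \<open>150 \<le> l0\<close> by (intro ln_mono) auto
    then have "ln a / 2 \<le> ln l" using \<open>ln a / 2 \<le> ln l0\<close> by linarith
    then show ?thesis
      using \<open>150 \<le> l0\<close> \<open>l0 \<le> l\<close> \<open>1 < a\<close> by (intro divide_right_mono mult_mono) auto
  qed
  finally have "ln 24 + (c + 1) * a \<le> l * ln l / 8" .
  moreover have "24 * n powr (c + 1) = exp (ln 24 + (c + 1) * a)"
    using assms(1) by (simp add: a_def powr_def exp_add)
  moreover have "l powr (l / 8) = exp (l * ln l / 8)"
    using \<open>150 \<le> l\<close> by (simp add: powr_def mult.commute)
  ultimately show "24 * n powr (c + 1) \<le> l powr (l / 8)" by simp
qed

definition machine_ops :: "('j \<Rightarrow> 'm list) \<Rightarrow> 'j set \<Rightarrow> 'm \<Rightarrow> ('j \<times> nat) set"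
  where "machine_ops seq J m = (SIGMA j:J. {i. i < length (seq j) \<and> seq j ! i = m})"

definition slot_candidates ::
    "('j \<Rightarrow> 'm list) \<Rightarrow> 'j set \<Rightarrow> int \<Rightarrow> 'm \<Rightarrow> ('j \<times> nat) set set"
  where "slot_candidates seq J l m =
    {A. A \<subseteq> machine_ops seq J m \<and> (A = {} \<or> l < int (card A))}"

lemma finite_machine_ops: "finite J \<Longrightarrow> finite (machine_ops seq J m)"
  unfolding machine_ops_def by (auto intro!: finite_SigmaI)

lemma finite_slot_candidates:
  assumes "finite J"
  shows "finite (slot_candidates seq J l m)"
proof (rule finite_subset)
  show "slot_candidates seq J l m \<subseteq> Pow (machine_ops seq J m)"
    unfolding slot_candidates_def by auto
  show "finite (Pow (machine_ops seq J m))"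
    using assms by (simp add: finite_machine_ops)
qed

lemma card_machine_ops_le_congestion:
  assumes "finite M" "finite J" "m \<in> M"
  shows "card (machine_ops seq J m) \<le> congestion M seq J"
proof -
  have "card (machine_ops seq J m) = (\<Sum>j\<in>J. occ seq j m)"
    unfolding machine_ops_def occ_def using assms(2) by (subst card_SigmaI) auto
  then show ?thesis
    unfolding congestion_def using assms(1,3) by (auto intro: Max_ge)
qed

lemma bad_pattern_subset_machine_ops:
  assumes "bad_pattern M L l seq J B"
  shows "B T m \<subseteq> machine_ops seq J m"
  using assms unfolding bad_pattern_def machine_ops_def
  by (cases "T \<in> {0..<2*L} \<and> m \<in> M") fastforce+

lemma bad_pattern_in_slot_candidates:
  assumes "finite J" "bad_pattern M L l seq J B" "T \<in> {0..<2*L}" "m \<in> M"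
  shows "B T m \<in> slot_candidates seq J l m"
proof -
  have "B T m \<subseteq> machine_ops seq J m"
    using assms(2) by (rule bad_pattern_subset_machine_ops)
  moreover have "finite (B T m)"
    using calculation finite_machine_ops[OF assms(1)] by (rule finite_subset)
  moreover have "card (B T m) = 0 \<or> l < int (card (B T m))"
    using assms(2-4) unfolding bad_pattern_def by auto
  ultimately show ?thesis
    unfolding slot_candidates_def by auto
qed

lemma bad_pattern_empty_outside:
  assumes "bad_pattern M L l seq J B" "(T, m) \<notin> {0..<2*L} \<times> M"
  shows "B T m = {}"
  using assms unfolding bad_pattern_def by auto

lemma bad_pattern_job_unique:
  assumes "bad_pattern M L l seq J B" "(j, i) \<in> B T m" "(j, i') \<in> B T' m'"
  shows "T = T' \<and> m = m' \<and> i = i'"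
proof -
  have unique: "\<forall>T\<in>{0..<2*L}. \<forall>m\<in>M. \<forall>T'\<in>{0..<2*L}. \<forall>m'\<in>M. \<forall>j i i'.
      (j, i) \<in> B T m \<longrightarrow> (j, i') \<in> B T' m' \<longrightarrow> T = T' \<and> m = m' \<and> i = i'"
    using assms(1) unfolding bad_pattern_def by (elim conjE) assumption
  have "T \<in> {0..<2*L}" "m \<in> M" "T' \<in> {0..<2*L}" "m' \<in> M"
    using bad_pattern_empty_outside[OF assms(1)] assms(2,3) by blast+
  then show ?thesis
    using unique assms(2,3) by blast
qed

lemma pattern_size_le_card:
  assumes "finite M" "finite J" "bad_pattern M L l seq J B"
  shows "pattern_size M L B \<le> card J"
proof -
  define U where "U = (SIGMA t:{0..<2*L} \<times> M. B (fst t) (snd t))"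
  have "pattern_size M L B = card U"
    unfolding U_def pattern_size_def
    using assms finite_subset[OF bad_pattern_subset_machine_ops finite_machine_ops]
    by (subst card_SigmaI) (auto simp: sum.cartesian_product split_def)
  also have "card U \<le> card J"
  proof (rule card_inj_on_le)
    show "inj_on (\<lambda>(t, j, i). j) U"
    proof (rule inj_onI)
      fix p q
      assume "p \<in> U" "q \<in> U" "(\<lambda>(t, j, i). j) p = (\<lambda>(t, j, i). j) q"
      moreover obtain T m j i T' m' j' i' where "p = ((T, m), j, i)" "q = ((T', m'), j', i')"
        by (metis prod.collapse)
      ultimately show "p = q"
        using bad_pattern_job_unique[OF assms(3)] unfolding U_def by auto
    qed
    show "(\<lambda>(t, j, i). j) ` U \<subseteq> J"
      using assms(3) unfolding U_def bad_pattern_def by fastforce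
  qed (rule assms(2))
  finally show ?thesis .
qed

lemma bad_pattern_congestion_pos:
  assumes "finite M" "finite J" "bad_pattern M L l seq J B"
  shows "0 < congestion M seq J"
proof -
  have "0 < (\<Sum>T\<in>{0..<2*L}. \<Sum>m\<in>M. card (B T m))"
    using assms(3) unfolding bad_pattern_def by linarith
  moreover have "(\<Sum>T\<in>{0..<2*L}. \<Sum>m\<in>M. card (B T m)) = 0"
    if "\<And>T m. m \<in> M \<Longrightarrow> B T m = {}"
    using that by simp
  ultimately obtain T m where "m \<in> M" "B T m \<noteq> {}"
    by (metis less_irrefl)
  then have "machine_ops seq J m \<noteq> {}"
    using bad_pattern_subset_machine_ops[OF assms(3)] by blast
  then have "0 < card (machine_ops seq J m)"
    using finite_machine_ops[OF assms(2)] by (simp add: card_gt_0_iff)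
  then show ?thesis
    using card_machine_ops_le_congestion[OF assms(1,2) \<open>m \<in> M\<close>, of seq] by linarith
qed

lemma card_bad_patterns_le_card_PiE:
  assumes "finite M" "finite J"
  shows "card {B. bad_pattern M L l seq J B \<and> pattern_size M L B = s}
    \<le> card {f \<in> PiE ({0..<2*L} \<times> M) (\<lambda>t. slot_candidates seq J l (snd t)).
              (\<Sum>t\<in>{0..<2*L} \<times> M. card (f t)) = s}"
    (is "card ?P \<le> card ?Q")
proof (rule card_inj_on_le)
  let ?S = "{0..<2*L} \<times> M"
  let ?r = "\<lambda>B. restrict (\<lambda>t. B (fst t) (snd t)) ?S"
  show "inj_on ?r ?P"
  proof (rule inj_onI)
    fix B B'
    assume "B \<in> ?P" "B' \<in> ?P" "?r B = ?r B'"
    then show "B = B'"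
    proof (intro ext)
      fix T m
      show "B T m = B' T m"
      proof (cases "(T, m) \<in> ?S")
        case True
        have "?r B (T, m) = ?r B' (T, m)" using \<open>?r B = ?r B'\<close> by simp
        with True show ?thesis by simp
      next
        case False
        have "bad_pattern M L l seq J B" "bad_pattern M L l seq J B'"
          using \<open>B \<in> ?P\<close> \<open>B' \<in> ?P\<close> by simp_all
        then show ?thesis
          using False bad_pattern_empty_outside by metis
      qed
    qed
  qed
  show "?r ` ?P \<subseteq> ?Q"
  proof (rule image_subsetI)
    fix B
    assume "B \<in> ?P"
    then have bad: "bad_pattern M L l seq J B" and size: "pattern_size M L B = s" by auto
    have "?r B \<in> PiE ?S (\<lambda>t. slot_candidates seq J l (snd t))"
      using bad_pattern_in_slot_candidates[OF assms(2) bad] by (auto simp: restrict_PiE_iff)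
    moreover have "(\<Sum>t\<in>?S. card (?r B t)) = (\<Sum>(T, m)\<in>?S. card (B T m))"
      by (intro sum.cong) auto
    moreover have "\<dots> = s"
      using size unfolding pattern_size_def by (simp add: sum.cartesian_product)
    ultimately show "?r B \<in> ?Q" by simp
  qed
  show "finite ?Q"
  proof (rule rev_finite_subset)
    show "finite (PiE ?S (\<lambda>t. slot_candidates seq J l (snd t)))"
      using assms by (intro finite_PiE) (auto simp: finite_slot_candidates)
  qed auto
qed

lemma card_bad_patterns_mult_power_le:
  fixes y :: real
  assumes "finite M" "finite J" "0 < l" "0 < congestion M seq J" "0 \<le> y" "y < 1"
  shows "real (card {B. bad_pattern M L l seq J B \<and> pattern_size M L B = s})
      * (y * l / (exp 1 * congestion M seq J)) ^ s
    \<le> (1 + y ^ Suc (nat l) / (1 - y)) ^ (nat (2 * L) * card M)"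
proof -
  define C where "C = real (congestion M seq J)"
  define S where "S = {0..<2*L} \<times> M"
  define x where "x = y * l / (exp 1 * C)"
  have "0 \<le> x" using assms by (simp add: x_def C_def)
  define z where "z = y ^ Suc (nat l) / (1 - y)"
  have slot: "(\<Sum>A\<in>slot_candidates seq J l m. x ^ card A) \<le> 1 + z" if "m \<in> M" for m
  proof -
    let ?ops = "machine_ops seq J m"
    have "slot_candidates seq J l m = insert {} {A. A \<subseteq> ?ops \<and> nat l < card A}"
      using assms(3) unfolding slot_candidates_def by auto
    moreover have "finite {A. A \<subseteq> ?ops \<and> nat l < card A}"
      by (intro finite_Collect_conjI disjI1 finite_Collect_subsets finite_machine_ops assms(2))
    ultimately have "(\<Sum>A\<in>slot_candidates seq J l m. x ^ card A)
        = 1 + (\<Sum>A | A \<subseteq> ?ops \<and> nat l < card A. x ^ card A)"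
      by simp
    also have "(\<Sum>A | A \<subseteq> ?ops \<and> nat l < card A. x ^ card A) \<le> z"
      using sum_large_subsets_power_le[OF finite_machine_ops[OF assms(2)], of seq m C "nat l" y]
        card_machine_ops_le_congestion[OF assms(1,2) that, of seq] assms
      by (simp add: x_def C_def z_def)
    finally show ?thesis by simp
  qed
  define G where "G = (\<lambda>t :: int \<times> _. slot_candidates seq J l (snd t))"
  have "real (card {B. bad_pattern M L l seq J B \<and> pattern_size M L B = s}) * x ^ s
      \<le> real (card {f \<in> PiE S G. (\<Sum>t\<in>S. card (f t)) = s}) * x ^ s"
    using card_bad_patterns_le_card_PiE[OF assms(1,2)] \<open>0 \<le> x\<close>
    unfolding S_def G_def by (intro mult_right_mono) simp_all
  also have "\<dots> \<le> (\<Prod>t\<in>S. \<Sum>A\<in>G t. x ^ card A)"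
    using assms(1,2) \<open>0 \<le> x\<close>
    by (intro card_PiE_fixed_total_mult_power_le) (auto simp: S_def G_def finite_slot_candidates)
  also have "\<dots> \<le> (\<Prod>t\<in>S. 1 + z)"
    using slot \<open>0 \<le> x\<close> by (intro prod_mono) (auto simp: S_def G_def intro: sum_nonneg)
  also have "\<dots> = (1 + z) ^ (nat (2 * L) * card M)"
    by (simp add: S_def card_cartesian_product)
  finally show ?thesis by (simp add: x_def C_def z_def)
qed

lemma nat_double_mult_le_powr:
  fixes n c :: real and L :: int
  assumes "real_of_int L \<le> 2 * n powr c" "0 < n"
  shows "real (nat (2 * L)) * n \<le> 4 * n powr (c + 1)"
proof -
  have "real (nat (2 * L)) \<le> 4 * n powr c"
    using assms(1) by (cases "0 \<le> L") simp_all
  then have "real (nat (2 * L)) * n \<le> 4 * n powr c * n"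
    using assms(2) by (intro mult_right_mono) auto
  then show ?thesis
    using assms(2) by (simp add: powr_add)
qed

lemma tail_factor_power_le_two:
  fixes n c :: real and l :: int and N :: nat
  assumes "0 < n" "150 \<le> l" "24 * n powr (c + 1) \<le> l powr (l / 8)"
    and "real N \<le> 4 * n powr (c + 1)"
  shows "(1 + (l powr (-1/8)) ^ Suc (nat l) / (1 - l powr (-1/8))) ^ N \<le> 2"
proof (rule one_plus_power_le_two)
  define y where "y = real_of_int l powr (-1/8)"
  have "0 < y" "y \<le> 2/3"
    using assms(2) powr_minus_one_eighth_le[of l] by (simp_all add: y_def)
  have "y ^ Suc (nat l) / (1 - y) \<le> 3 * y ^ nat l"
  proof -
    have "y ^ Suc (nat l) \<le> y ^ nat l"
      using \<open>0 < y\<close> \<open>y \<le> 2/3\<close> by (intro power_decreasing) auto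
    then show ?thesis
      using \<open>0 < y\<close> \<open>y \<le> 2/3\<close> by (simp add: field_simps)
  qed
  also have "y ^ nat l = l powr (real (nat l) * (-1/8))"
    using assms(2) unfolding y_def by (intro powr_power) simp
  also have "\<dots> = l powr (- (l / 8))"
    using assms(2) by simp
  also have "\<dots> = 1 / l powr (l / 8)"
    by (rule powr_minus_divide)
  finally have tail: "y ^ Suc (nat l) / (1 - y) \<le> 3 / l powr (l / 8)" by simp
  have "real N * (y ^ Suc (nat l) / (1 - y)) \<le> 4 * n powr (c + 1) * (3 / l powr (l / 8))"
    using assms(4) tail \<open>0 < y\<close> \<open>y \<le> 2/3\<close> by (intro mult_mono) auto
  also have "\<dots> \<le> 1/2"
    using assms(1-3) by (simp add: field_simps)
  finally show "real N * (y ^ Suc (nat l) / (1 - y)) \<le> 1/2" .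
  show "0 \<le> y ^ Suc (nat l) / (1 - y)"
    using \<open>0 < y\<close> \<open>y \<le> 2/3\<close> by simp
qed

lemma weighted_count_le_imp_count_le:
  fixes p l C :: real
  assumes "p * (l powr (-1/8) * l / (exp 1 * C)) ^ s \<le> 2"
    and "1 \<le> l" "0 < C" "s \<le> k"
  shows "p \<le> 2 * exp (real k * ln l / 8) * (exp 1 * C / l) ^ s"
proof -
  define y where "y = l powr (-1/8)"
  have "0 < y" using assms(2) by (simp add: y_def)
  have "p * (y * l / (exp 1 * C)) ^ s \<le> 2"
    using assms(1) unfolding y_def .
  then have "p \<le> 2 * (1 / y) ^ s * (exp 1 * C / l) ^ s"
    using assms(2,3) \<open>0 < y\<close> by (simp add: field_simps power_mult_distrib)
  also have "(1 / y) ^ s \<le> exp (real k * ln l / 8)"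
  proof -
    have "(1 / y) ^ s = l powr (real s * (1/8))"
      using assms(2) by (simp add: y_def powr_minus_divide powr_power)
    also have "\<dots> \<le> l powr (real k * (1/8))"
      using assms(2,4) by (intro powr_mono) auto
    also have "\<dots> = exp (real k * ln l / 8)"
      using assms(2) by (simp add: powr_def)
    finally show ?thesis .
  qed
  then have "2 * (1 / y) ^ s * (exp 1 * C / l) ^ s
      \<le> 2 * exp (real k * ln l / 8) * (exp 1 * C / l) ^ s"
    using assms(2,3) by (intro mult_right_mono) auto
  finally show ?thesis .
qed

theorem lemma5p16:
  fixes M :: "'m set" and J :: "'j set" and seq :: "'j \<Rightarrow> 'm list"
    and c :: real and L l :: int and s :: nat
  assumes "finite M" and "card M \<ge> 32"
    and "finite J" and "\<forall>j\<in>J. set (seq j) \<subseteq> M"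
    and "c \<ge> 1"
    and "real (card J) \<le> real (card M) powr c"
    and "2 * real (card M) powr c \<ge> real_of_int L"
    and "real_of_int l \<ge> 150 * c * ln (real (card M)) / ln (ln (real (card M)))"
  shows "real (card {B. bad_pattern M L l seq J B \<and> pattern_size M L B = s})
    \<le> 2 * exp (real (card J) * ln (real_of_int l) / 8)
        * (exp 1 * real (congestion M seq J) / real_of_int l) ^ s"
proof -
  define n where "n = real (card M)"
  define y where "y = real_of_int l powr (-1/8)"
  let ?P = "{B. bad_pattern M L l seq J B \<and> pattern_size M L B = s}"
  have "32 \<le> n" using assms(2) by (simp add: n_def)
  then have l150: "150 \<le> real_of_int l" and l_powr: "24 * n powr (c + 1) \<le> l powr (l / 8)"
    using threshold_bounds[of n c l] assms(5,8) by (simp_all add: n_def)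
  show ?thesis
  proof (cases "?P = {}")
    case True
    show ?thesis unfolding True using l150 by simp
  next
    case False
    then obtain B where B: "bad_pattern M L l seq J B" "pattern_size M L B = s" by auto
    have slots: "real (nat (2 * L) * card M) \<le> 4 * n powr (c + 1)"
      using nat_double_mult_le_powr[of L n c] assms(7) \<open>32 \<le> n\<close> by (simp add: n_def)
    have "real (card ?P) * (y * l / (exp 1 * congestion M seq J)) ^ s
        \<le> (1 + y ^ Suc (nat l) / (1 - y)) ^ (nat (2 * L) * card M)"
      using l150 powr_minus_one_eighth_le[of l] bad_pattern_congestion_pos[OF assms(1,3) B(1)]
      by (intro card_bad_patterns_mult_power_le assms(1,3)) (simp_all add: y_def)
    also have "\<dots> \<le> 2"
      unfolding y_def using \<open>32 \<le> n\<close> l150 l_powr slots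
      by (intro tail_factor_power_le_two) simp_all
    finally show ?thesis
      using l150 bad_pattern_congestion_pos[OF assms(1,3) B(1)]
        pattern_size_le_card[OF assms(1,3) B(1)]
      unfolding y_def B(2) by (intro weighted_count_le_imp_count_le) simp_all
  qed
qed

end
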